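(* Let $L_0,\dots,L_N$ be connected, closed, embedded Lagrangian submanifolds of a closed symplectic manifold $X$ with $\iota_N:L=\coprod_{i=0}^NL_i\to X$ having transverse self-intersection, let $V=\{0,\dots,N\}=V'\sqcup V''$ be a partition, $L'=\coprod_{v\in V'}L_v$, $L''=\coprod_{v\in V''}L_v$, and let $E_0=(L'\times_XL')\cup(L'\times_XL'')\cup(L''\times_XL'')\subset L\times_XL$. Let $\mathscr M_{\iota',\iota''}$ be the full $\mathbf{fc}$-submulticategory of $\mathscr M_{\iota_N}$ on the directed subgraph $(V,E_0)$. Then $\mathscr M_{\iota',\iota''}$ is factor-closed in $\mathscr M_{\iota_N}$.
   Context: $\mathscr M_{\iota_N}$ is the vertically discrete $\mathbf{fc}$-multicategory whose $0$-cells are $V=\{0,\dots,N\}$ (components of $L$), horizontal $1$-cells the points $(p,q)\in L\times_XL$ (from the index of the component containing $p$ to that containing $q$), and $2$-cells over a profile-loop $(e_1,\dots,e_n;e_0)$ the moduli space of isomorphism classes of $J$-holomorphic stable polygons $(\Sigma,z_0,\dots,z_n,u,\gamma)$ with boundary on $\iota_N(L)$, boundary lift $\gamma$ to $L$, $(\gamma(z_0+),\gamma(z_0-))=e_0$, $(\gamma(z_i-),\gamma(z_i+))=e_i$; composition is gluing at boundary marked points, identity $2$-cells adjoined by convention. For a directed graph $(V,E,s,t)$: $E^*$ = composable strings; profile-loop $(\vec e;e_0)$ = $\vec e\in E^*$ with the same start/end vertex as $e_0$. A vertically discrete $\mathbf{fc}$-multicategory has $2$-cell sets per profile-loop, identity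 $2$-cells, and partial compositions $\circ_i$ satisfying coloured-operad axioms. For a directed subgraph $E_0$, the full $\mathbf{fc}$-submulticategory on $E_0$ keeps all $2$-cells over profile-loops whose edges lie in $E_0$. It is factor-closed if $\mathbf u\circ_i\mathbf u'$ in it implies $\mathbf u$ and $\mathbf u'$ in it. *)

theory Defs
  imports Main
begin

text \<open>The empty string at vertex v counts as a profile-loop for e0 iff s e0 = t e0 = v.\<close>

fun composable :: "('e \<Rightarrow> nat) \<Rightarrow> ('e \<Rightarrow> nat) \<Rightarrow> 'e list \<Rightarrow> bool" where
  "composable s t [] = True"
| "composable s t [e] = True"
| "composable s t (e # f # es) = (t e = s f \<and> composable s t (f # es))"

definition profile_loop :: "('e \<Rightarrow> nat) \<Rightarrow> ('e \<Rightarrow> nat) \<Rightarrow> 'e list \<Rightarrow> 'e \<Rightarrow> bool" where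
  "profile_loop s t es e0 =
     (if es = [] then s e0 = t e0
      else composable s t es \<and> s (hd es) = s e0 \<and> t (last es) = t e0)"

text \<open>A vertically discrete fc-multicategory over the directed graph (V,E,s,t):
  a set C of 2-cells, each lying over a profile-loop (ins u; outp u),
  identity 2-cells, and partial compositions pcomp u i v = u \<circ>_(i+1) v (0-based index i),
  satisfying the coloured-operad axioms.\<close>

definition vd_fc_multicategory ::
  "nat set \<Rightarrow> 'e set \<Rightarrow> ('e \<Rightarrow> nat) \<Rightarrow> ('e \<Rightarrow> nat) \<Rightarrow> 'c set \<Rightarrow> ('c \<Rightarrow> 'e list) \<Rightarrow> ('c \<Rightarrow> 'e)
    \<Rightarrow> ('e \<Rightarrow> 'c) \<Rightarrow> ('c \<Rightarrow> nat \<Rightarrow> 'c \<Rightarrow> 'c) \<Rightarrow> bool" where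
  "vd_fc_multicategory V E s t C ins outp ident pcomp \<longleftrightarrow>
     (\<forall>e\<in>E. s e \<in> V \<and> t e \<in> V) \<and>
     (\<forall>u\<in>C. set (ins u) \<subseteq> E \<and> outp u \<in> E \<and> profile_loop s t (ins u) (outp u)) \<and>
     (\<forall>e\<in>E. ident e \<in> C \<and> ins (ident e) = [e] \<and> outp (ident e) = e) \<and>
     (\<forall>u\<in>C. \<forall>v\<in>C. \<forall>i. i < length (ins u) \<and> outp v = ins u ! i \<longrightarrow>
         pcomp u i v \<in> C \<and> ins (pcomp u i v) = take i (ins u) @ ins v @ drop (Suc i) (ins u)
         \<and> outp (pcomp u i v) = outp u) \<and>
     (\<forall>u\<in>C. pcomp (ident (outp u)) 0 u = u) \<and>
     (\<forall>u\<in>C. \<forall>i < length (ins u). pcomp u i (ident (ins u ! i)) = u) \<and>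
     (\<forall>u\<in>C. \<forall>v\<in>C. \<forall>w\<in>C. \<forall>i j. i < length (ins u) \<and> outp v = ins u ! i \<and>
         j < length (ins v) \<and> outp w = ins v ! j \<longrightarrow>
         pcomp (pcomp u i v) (i + j) w = pcomp u i (pcomp v j w)) \<and>
     (\<forall>u\<in>C. \<forall>v\<in>C. \<forall>w\<in>C. \<forall>i k. i < k \<and> k < length (ins u) \<and> outp v = ins u ! i \<and>
         outp w = ins u ! k \<longrightarrow>
         pcomp (pcomp u k w) i v = pcomp (pcomp u i v) (k + length (ins v) - 1) w)"

definition full_sub_cells :: "'e set \<Rightarrow> 'c set \<Rightarrow> ('c \<Rightarrow> 'e list) \<Rightarrow> ('c \<Rightarrow> 'e) \<Rightarrow> 'c set" where
  "full_sub_cells E0 C ins outp = {u \<in> C. set (ins u) \<subseteq> E0 \<and> outp u \<in> E0}"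

definition factor_closed ::
  "'c set \<Rightarrow> 'c set \<Rightarrow> ('c \<Rightarrow> 'e list) \<Rightarrow> ('c \<Rightarrow> 'e) \<Rightarrow> ('c \<Rightarrow> nat \<Rightarrow> 'c \<Rightarrow> 'c) \<Rightarrow> bool" where
  "factor_closed D C ins outp pcomp \<longleftrightarrow>
     (\<forall>u\<in>C. \<forall>v\<in>C. \<forall>i. i < length (ins u) \<and> outp v = ins u ! i \<and> pcomp u i v \<in> D
        \<longrightarrow> u \<in> D \<and> v \<in> D)"

end

theory Submission
  imports Defs
begin

text \<open>Since \<open>V = V' \<union> V''\<close>, the edges of \<open>E\<^sub>0\<close> are exactly those that do not run from
  \<open>V''\<close> to \<open>V'\<close>. A composable string of such edges starting in \<open>V''\<close> ends in \<open>V''\<close>, so a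
  2-cell whose inputs all lie in \<open>E\<^sub>0\<close> has its output in \<open>E\<^sub>0\<close> as well. Factor-closedness
  follows: the inputs of \<open>u \<circ>\<^sub>i v\<close> are those of \<open>u\<close> with the \<open>i\<close>-th one, which is the
  output of \<open>v\<close>, replaced by the inputs of \<open>v\<close>.\<close>

lemma composable_target_last_mem:
  assumes "composable s t es" "es \<noteq> []"
    and "\<forall>e\<in>set es. s e \<in> B \<longrightarrow> t e \<in> B" "s (hd es) \<in> B"
  shows "t (last es) \<in> B"
  using assms by (induction s t es rule: composable.induct) auto

lemma profile_loop_target_mem:
  assumes "profile_loop s t es e0"
    and "\<forall>e\<in>set es. s e \<in> B \<longrightarrow> t e \<in> B" "s e0 \<in> B"
  shows "t e0 \<in> B"
proof (cases "es = []")
  case True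
  then show ?thesis using assms by (simp add: profile_loop_def)
next
  case False
  then have "composable s t es" "s (hd es) = s e0" "t (last es) = t e0"
    using assms(1) by (auto simp: profile_loop_def)
  then show ?thesis
    using composable_target_last_mem[OF _ False assms(2)] assms(3) by simp
qed

lemma vd_fc_multicategory_edge:
  assumes "vd_fc_multicategory V E s t C ins outp ident pcomp" "e \<in> E"
  shows "s e \<in> V" "t e \<in> V"
  using assms by (simp_all add: vd_fc_multicategory_def)

lemma vd_fc_multicategory_cell:
  assumes "vd_fc_multicategory V E s t C ins outp ident pcomp" "u \<in> C"
  shows "set (ins u) \<subseteq> E" "outp u \<in> E" "profile_loop s t (ins u) (outp u)"
  using assms by (auto simp: vd_fc_multicategory_def)

lemma vd_fc_multicategory_pcomp:
  assumes "vd_fc_multicategory V E s t C ins outp ident pcomp" "u \<in> C" "v \<in> C"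
    and "i < length (ins u)" "outp v = ins u ! i"
  shows "ins (pcomp u i v) = take i (ins u) @ ins v @ drop (Suc i) (ins u)"
    and "outp (pcomp u i v) = outp u"
  using assms by (simp_all add: vd_fc_multicategory_def)

lemma factor_closed_full_sub_cellsI:
  assumes M: "vd_fc_multicategory V E s t C ins outp ident pcomp"
    and output_closed: "\<And>v. v \<in> C \<Longrightarrow> set (ins v) \<subseteq> E0 \<Longrightarrow> outp v \<in> E0"
  shows "factor_closed (full_sub_cells E0 C ins outp) C ins outp pcomp"
  unfolding factor_closed_def
proof (intro ballI allI impI)
  fix u v i
  assume u: "u \<in> C" and v: "v \<in> C"
    and comp: "i < length (ins u) \<and> outp v = ins u ! i \<and> pcomp u i v \<in> full_sub_cells E0 C ins outp"
  then have i: "i < length (ins u)" and out_v: "outp v = ins u ! i"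
    and sub: "set (ins (pcomp u i v)) \<subseteq> E0" "outp (pcomp u i v) \<in> E0"
    by (auto simp: full_sub_cells_def)
  note ins_comp = vd_fc_multicategory_pcomp[OF M u v i out_v]
  have ins_v: "set (ins v) \<subseteq> E0"
    using sub(1) ins_comp(1) by auto
  have "ins u ! i \<in> E0"
    using output_closed[OF v ins_v] out_v by simp
  moreover have "set (ins u) = set (take i (ins u) @ ins u ! i # drop (Suc i) (ins u))"
    using id_take_nth_drop[OF i] by (rule arg_cong)
  ultimately have "set (ins u) \<subseteq> E0"
    using sub(1) ins_comp(1) by auto
  then show "u \<in> full_sub_cells E0 C ins outp \<and> v \<in> full_sub_cells E0 C ins outp"
    using u v ins_v output_closed[OF v ins_v] sub(2) ins_comp(2)
    by (simp add: full_sub_cells_def)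
qed

theorem mainTheorem9:
  fixes N :: nat and V' V'' :: "nat set"
    and E :: "'e set" and s t :: "'e \<Rightarrow> nat"
    and C :: "'c set" and ins :: "'c \<Rightarrow> 'e list" and outp :: "'c \<Rightarrow> 'e"
    and ident :: "'e \<Rightarrow> 'c" and pcomp :: "'c \<Rightarrow> nat \<Rightarrow> 'c \<Rightarrow> 'c"
  assumes M: "vd_fc_multicategory {0..N} E s t C ins outp ident pcomp"
    and part: "V' \<union> V'' = {0..N}" "V' \<inter> V'' = {}"
  shows "factor_closed
           (full_sub_cells
              {e \<in> E. (s e \<in> V' \<and> t e \<in> V') \<or> (s e \<in> V' \<and> t e \<in> V'') \<or> (s e \<in> V'' \<and> t e \<in> V'')}
              C ins outp)
           C ins outp pcomp"
proof -
  let ?E0 = "{e \<in> E. s e \<in> V'' \<longrightarrow> t e \<in> V''}"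
  have E0_eq: "{e \<in> E. (s e \<in> V' \<and> t e \<in> V') \<or> (s e \<in> V' \<and> t e \<in> V'') \<or> (s e \<in> V'' \<and> t e \<in> V'')} = ?E0"
    using vd_fc_multicategory_edge[OF M] part by blast
  have "outp v \<in> ?E0" if "v \<in> C" "set (ins v) \<subseteq> ?E0" for v
  proof -
    have "\<forall>e\<in>set (ins v). s e \<in> V'' \<longrightarrow> t e \<in> V''"
      using that(2) by blast
    with vd_fc_multicategory_cell[OF M that(1)] show ?thesis
      using profile_loop_target_mem[of s t "ins v" "outp v" V''] by simp
  qed
  then show ?thesis
    unfolding E0_eq by (rule factor_closed_full_sub_cellsI[OF M])
qed

end
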